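(* For all integers $n\le d\le r\le R_{\mathrm{typ\text{-}max}}(n,d,n)$, there exist matrices $\mathbf A,\mathbf C\in\mathbb{R}^{n\times r}$, $\mathbf B\in\mathbb{R}^{d\times r}$ and a vector $\mathbf h_0\in\mathbb{R}^n$ such that the CP rank of $[\![\mathbf A,\mathbf B,\mathbf C]\!]$ equals $r$ and $\operatorname{rank}(\mathbf B\,\mathrm{diag}(\mathbf A^\top\mathbf h_0)\mathbf C^\top)=\operatorname{rank}(\tanh(\mathbf B\,\mathrm{diag}(\mathbf A^\top\mathbf h_0)\mathbf C^\top))=n$, where $\tanh$ is applied componentwise.
   Context: For $\mathbf A\in\mathbb{R}^{n\times r},\mathbf B\in\mathbb{R}^{d\times r},\mathbf C\in\mathbb{R}^{n\times r}$ with columns $\mathbf a_s,\mathbf b_s,\mathbf c_s$, $[\![\mathbf A,\mathbf B,\mathbf C]\!]=\sum_{s=1}^r\mathbf a_s\circ\mathbf b_s\circ\mathbf c_s\in\mathbb{R}^{n\times d\times n}$. The CP rank of a tensor is the least number of rank-one (outer product) terms summing to it. A typical rank of $\mathbb{R}^{n\times d\times n}$ is a value $R$ such that the set of tensors of CP rank $R$ has positive Lebesgue measure; $R_{\mathrm{typ\text{-}max}}(n,d,n)$ is the largest typical rank. *)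

theory Defs
  imports "HOL-Analysis.Lebesgue_Measure" "Jordan_Normal_Form.DL_Rank"
begin

text \<open>Third-order real tensors of shape n x d x m are represented as functions on
  index triples; only the entries with indices in the box matter.\<close>

definition tensor_box :: "nat \<Rightarrow> nat \<Rightarrow> nat \<Rightarrow> (nat \<times> nat \<times> nat) set" where
  "tensor_box n d m = {..<n} \<times> {..<d} \<times> {..<m}"

definition cp_rank :: "nat \<Rightarrow> nat \<Rightarrow> nat \<Rightarrow> (nat \<times> nat \<times> nat \<Rightarrow> real) \<Rightarrow> nat" where
  "cp_rank n d m T = (LEAST R. \<exists>a b c :: nat \<Rightarrow> nat \<Rightarrow> real.
      \<forall>i<n. \<forall>j<d. \<forall>k<m. T (i, j, k) = (\<Sum>s<R. a s i * b s j * c s k))"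

definition tensor_lebesgue :: "nat \<Rightarrow> nat \<Rightarrow> nat \<Rightarrow> (nat \<times> nat \<times> nat \<Rightarrow> real) measure" where
  "tensor_lebesgue n d m = Pi\<^sub>M (tensor_box n d m) (\<lambda>_. lborel)"

definition typical_rank :: "nat \<Rightarrow> nat \<Rightarrow> nat \<Rightarrow> nat \<Rightarrow> bool" where
  "typical_rank n d m R \<longleftrightarrow>
     (let S = {T \<in> space (tensor_lebesgue n d m). cp_rank n d m T = R}
      in S \<in> sets (tensor_lebesgue n d m) \<and> emeasure (tensor_lebesgue n d m) S > 0)"

definition R_typ_max :: "nat \<Rightarrow> nat \<Rightarrow> nat \<Rightarrow> nat" where
  "R_typ_max n d m = Max {R. typical_rank n d m R}"

definition cp_tensor :: "real mat \<Rightarrow> real mat \<Rightarrow> real mat \<Rightarrow> (nat \<times> nat \<times> nat \<Rightarrow> real)" where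
  "cp_tensor A B C = (\<lambda>(i, j, k). \<Sum>s<dim_col A. A $$ (i, s) * B $$ (j, s) * C $$ (k, s))"

definition diag_of_vec :: "real vec \<Rightarrow> real mat" where
  "diag_of_vec v = mat (dim_vec v) (dim_vec v) (\<lambda>(i, j). if i = j then v $ i else 0)"

definition mat_rank :: "real mat \<Rightarrow> nat" where
  "mat_rank M = vec_space.rank (dim_row M) M"

end

(* A tensor T whose first slice, the n x n matrix T(0, j, k), is nonsingular can be found among
   the tensors of the maximal typical rank R, because the tensors with singular first slice form
   a null set: the determinant is a nonzero multi-affine function of the entries. Write the slice
   as a sum of R rank-one matrices coming from a minimal CP decomposition of T. As long as more
   than n terms remain, one of them can be dropped keeping the sum nonsingular (a trace
   computation). Any r of the R terms still form a minimal decomposition, of rank r. Multiplying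
   the third mode by the inverse of the resulting slice turns it into the identity, and with
   h0 = e_0 the matrix B diag(A^T h0) C^T is exactly that slice on top of d - n further rows; its
   top block is I and that of its tanh is tanh 1 * I, so both have rank n. *)

theory Submission
  imports Defs "HOL-Analysis.Function_Metric" "Jordan_Normal_Form.DL_Rank_Submatrix"
begin

unbundle no vec_syntax
unbundle no inner_syntax

section \<open>Multi-affine functions\<close>

definition multiaffine :: "(('i \<Rightarrow> real) \<Rightarrow> real) \<Rightarrow> bool" where
  "multiaffine f \<longleftrightarrow> (\<forall>x i. \<exists>a b. \<forall>t. f (x(i := t)) = a + t * b)"

lemma multiaffine_coordinate:
  assumes "multiaffine f"
  shows "f (x(i := t)) = f (x(i := 0)) + t * (f (x(i := 1)) - f (x(i := 0)))"
proof -
  obtain a b where "\<And>t. f (x(i := t)) = a + t * b"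
    using assms unfolding multiaffine_def by blast
  then show ?thesis by simp
qed

lemma multiaffine_fun_upd:
  assumes "multiaffine f"
  shows "multiaffine (\<lambda>x. f (x(i := c)))"
  unfolding multiaffine_def
proof (intro allI)
  fix x j
  show "\<exists>a b. \<forall>t. f (x(j := t, i := c)) = a + t * b"
  proof (cases "j = i")
    case True
    then show ?thesis by (intro exI[of _ "f (x(i := c))"] exI[of _ 0]) simp
  next
    case False
    then have "x(j := t, i := c) = (x(i := c))(j := t)" for t
      by (simp add: fun_upd_twist)
    then show ?thesis using assms unfolding multiaffine_def by presburger
  qed
qed

lemma multiaffine_diff:
  assumes "multiaffine f" "multiaffine g"
  shows "multiaffine (\<lambda>x. f x - g x)"
  unfolding multiaffine_def
proof (intro allI)
  fix x i
  obtain a b a' b' where "\<And>t. f (x(i := t)) = a + t * b" "\<And>t. g (x(i := t)) = a' + t * b'"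
    using assms unfolding multiaffine_def by metis
  then have "\<forall>t. f (x(i := t)) - g (x(i := t)) = (a - a') + t * (b - b')"
    by (simp add: algebra_simps)
  then show "\<exists>a b. \<forall>t. f (x(i := t)) - g (x(i := t)) = a + t * b" by blast
qed

lemma multiaffine_split:
  assumes "multiaffine f" "i \<notin> I" "x \<in> space (Pi\<^sub>M (insert i I) M)"
  shows "f x = f ((restrict x I)(i := 0)) + x i * (f ((restrict x I)(i := 1)) - f ((restrict x I)(i := 0)))"
proof -
  have "x = (restrict x I)(i := x i)"
    using assms(2,3) by (auto simp: space_PiM PiE_iff extensional_def fun_eq_iff)
  then show ?thesis using multiaffine_coordinate[OF assms(1)] by metis
qed

lemma borel_measurable_multiaffine:
  assumes "finite I" "multiaffine f"
  shows "f \<in> borel_measurable (Pi\<^sub>M I (\<lambda>_. lborel))"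
  using assms
proof (induction I arbitrary: f rule: finite_induct)
  case empty
  show ?case
    by (rule measurable_cong[THEN iffD2, OF _ borel_measurable_const[of "f (\<lambda>_. undefined)"]])
       (simp add: space_PiM)
next
  case (insert i I f)
  define g where "g c x = f (x(i := c))" for c x
  have [measurable]: "g c \<in> borel_measurable (Pi\<^sub>M I (\<lambda>_. lborel))" for c
    unfolding g_def using insert.IH multiaffine_fun_upd[OF insert.prems] .
  have "(\<lambda>x. g 0 (restrict x I) + x i * (g 1 (restrict x I) - g 0 (restrict x I)))
      \<in> borel_measurable (Pi\<^sub>M (insert i I) (\<lambda>_. lborel))"
    using measurable_restrict_subset[of I "insert i I"] by measurable
  then show ?case
    by (rule measurable_cong[THEN iffD1, rotated])
       (metis g_def multiaffine_split[OF insert.prems insert.hyps(2)])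
qed

lemma affine_zero_set_null:
  fixes a b :: real
  assumes "a \<noteq> 0 \<or> b \<noteq> 0"
  shows "{t. a + t * b = 0} \<in> null_sets lborel"
proof (rule null_sets_subset[OF finite_imp_null_set_lborel])
  show "{t. a + t * b = 0} \<subseteq> {- a / b}"
    using assms by (cases "b = 0") (auto simp: field_simps)
qed auto

lemma null_sets_PiM_insert:
  assumes "finite I" "i \<notin> I" "Z \<in> sets (Pi\<^sub>M (insert i I) (\<lambda>_. lborel :: real measure))"
    and "N \<in> null_sets (Pi\<^sub>M I (\<lambda>_. lborel))"
    and fibre: "\<And>x. x \<in> space (Pi\<^sub>M I (\<lambda>_. lborel)) \<Longrightarrow> x \<notin> N \<Longrightarrow> {t. x(i := t) \<in> Z} \<in> null_sets lborel"
  shows "Z \<in> null_sets (Pi\<^sub>M (insert i I) (\<lambda>_. lborel))"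
proof -
  let ?M = "\<lambda>I. Pi\<^sub>M I (\<lambda>_. lborel :: real measure)"
  interpret product_sigma_finite "\<lambda>_. lborel :: real measure" by standard
  have "emeasure (?M (insert i I)) Z = (\<integral>\<^sup>+ x. (\<integral>\<^sup>+ t. indicator Z (x(i := t)) \<partial>lborel) \<partial>?M I)"
    using assms(1-3) by (subst product_nn_integral_insert[symmetric]) auto
  also have "\<dots> = (\<integral>\<^sup>+ x. 0 \<partial>?M I)"
  proof (rule nn_integral_cong_AE)
    have fibre_integral: "(\<integral>\<^sup>+ t. indicator Z (x(i := t)) \<partial>lborel) = 0"
      if "x \<in> space (?M I)" "x \<notin> N" for x
    proof -
      have null: "{t. x(i := t) \<in> Z} \<in> null_sets lborel" by (rule fibre[OF that])
      have "(\<lambda>t. indicator Z (x(i := t)) :: ennreal) = indicator {t. x(i := t) \<in> Z}"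
        by (intro ext) (simp add: indicator_def)
      then have "(\<integral>\<^sup>+ t. indicator Z (x(i := t)) \<partial>lborel) = emeasure lborel {t. x(i := t) \<in> Z}"
        using null_setsD2[OF null] by simp
      also have "\<dots> = 0" using null by (rule null_setsD1)
      finally show ?thesis .
    qed
    show "AE x in ?M I. (\<integral>\<^sup>+ t. indicator Z (x(i := t)) \<partial>lborel) = 0"
      using AE_not_in[OF assms(4)] AE_space by eventually_elim (use fibre_integral in auto)
  qed
  also have "\<dots> = 0" by simp
  finally show ?thesis using assms(3) by (rule null_setsI)
qed

text \<open>Induction on the coordinates: in direction i, f x = g0 x + x i * g1 x, so outside the
  null set where g0 and g1 both vanish the fibres of the zero set are single points at most.\<close>
lemma multiaffine_zero_set_null:
  assumes "finite I" "multiaffine f" "x0 \<in> space (Pi\<^sub>M I (\<lambda>_. lborel))" "f x0 \<noteq> 0"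
  shows "{x \<in> space (Pi\<^sub>M I (\<lambda>_. lborel)). f x = 0} \<in> null_sets (Pi\<^sub>M I (\<lambda>_. lborel))"
  using assms
proof (induction I arbitrary: f x0 rule: finite_induct)
  case empty
  then have "space (Pi\<^sub>M {} (\<lambda>_. lborel :: real measure)) = {x0}"
    by (auto simp: space_PiM)
  with empty.prems(3) have "{x \<in> space (Pi\<^sub>M {} (\<lambda>_. lborel)). f x = 0} = {}"
    by auto
  then show ?case by (metis null_sets.empty_sets)
next
  case (insert i I f x0)
  let ?M = "\<lambda>I. Pi\<^sub>M I (\<lambda>_. lborel :: real measure)"
  define g0 where "g0 x = f (x(i := 0))" for x
  define g1 where "g1 x = f (x(i := 1)) - f (x(i := 0))" for x
  have affine_upd: "multiaffine (\<lambda>x. f (x(i := c)))" for c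
    by (rule multiaffine_fun_upd[OF insert.prems(1)])
  have affine_g: "multiaffine g0" "multiaffine g1"
    unfolding g0_def g1_def using affine_upd multiaffine_diff[OF affine_upd affine_upd] by auto
  have [measurable]: "g0 \<in> borel_measurable (?M I)" "g1 \<in> borel_measurable (?M I)"
    using insert.hyps(1) affine_g by (simp_all add: borel_measurable_multiaffine)
  have [measurable]: "f \<in> borel_measurable (?M (insert i I))"
    using insert.hyps(1) insert.prems(1) by (intro borel_measurable_multiaffine) auto
  define N where "N = {x \<in> space (?M I). g0 x = 0 \<and> g1 x = 0}"
  have "N \<in> sets (?M I)" unfolding N_def by measurable
  have "N \<in> null_sets (?M I)"
  proof -
    define x1 where "x1 = restrict x0 I"
    have x1: "x1 \<in> space (?M I)"
      using insert.prems(2) by (auto simp: x1_def space_PiM)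
    have "f x0 = g0 x1 + x0 i * g1 x1"
      unfolding g0_def g1_def x1_def
      by (rule multiaffine_split[OF insert.prems(1) insert.hyps(2) insert.prems(2)])
    then have "g0 x1 \<noteq> 0 \<or> g1 x1 \<noteq> 0"
      using insert.prems(3) by auto
    moreover have "N \<subseteq> {x \<in> space (?M I). g0 x = 0}" "N \<subseteq> {x \<in> space (?M I). g1 x = 0}"
      by (auto simp: N_def)
    ultimately show ?thesis
      using insert.IH[OF affine_g(1) x1] insert.IH[OF affine_g(2) x1] \<open>N \<in> sets (?M I)\<close>
      by (blast intro: null_sets_subset)
  qed
  let ?Z = "{x \<in> space (?M (insert i I)). f x = 0}"
  show ?case
  proof (rule null_sets_PiM_insert[OF insert.hyps(1,2) _ \<open>N \<in> null_sets (?M I)\<close>])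
    show "?Z \<in> sets (?M (insert i I))" by measurable
    fix x assume x: "x \<in> space (?M I)" "x \<notin> N"
    have "f (x(i := t)) = g0 x + t * g1 x" for t
      unfolding g0_def g1_def by (rule multiaffine_coordinate[OF insert.prems(1)])
    moreover have "x(i := t) \<in> space (?M (insert i I))" for t
      using x(1) by (auto simp: space_PiM PiE_iff extensional_def)
    ultimately have "{t. x(i := t) \<in> ?Z} = {t. g0 x + t * g1 x = 0}"
      by auto
    also have "\<dots> \<in> null_sets lborel"
      using x by (intro affine_zero_set_null) (auto simp: N_def)
    finally show "{t. x(i := t) \<in> ?Z} \<in> null_sets lborel" .
  qed
qed

section \<open>The first slice\<close>

lemma det_affine_in_entry:
  fixes A :: "real mat"
  assumes "A \<in> carrier_mat n n" "i < n"
  shows "\<exists>a b. \<forall>t. det (mat n n (\<lambda>(k, l). if (k, l) = (i, j) then t else A $$ (k, l))) = a + t * b"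
proof -
  define A' where "A' t = mat n n (\<lambda>(k, l). if (k, l) = (i, j) then t else A $$ (k, l))" for t
  have "mat_delete (A' t) i l = mat_delete A i l" for t l
    using assms by (intro eq_matI) (auto simp: A'_def mat_delete_def)
  then have cofactor_eq: "cofactor (A' t) i l = cofactor A i l" for t l
    by (simp add: cofactor_def)
  have "det (A' t) = (\<Sum>l<n. (if l = j then 0 else A $$ (i, l)) * cofactor A i l)
      + t * (if j < n then cofactor A i j else 0)" for t
  proof -
    have "det (A' t) = (\<Sum>l<n. A' t $$ (i, l) * cofactor (A' t) i l)"
      using assms(2) by (intro laplace_expansion_row) (simp_all add: A'_def)
    also have "\<dots> = (\<Sum>l<n. (if l = j then t else A $$ (i, l)) * cofactor A i l)"
      using assms(2) by (intro sum.cong refl) (simp only: cofactor_eq, simp add: A'_def)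
    also have "\<dots> = (\<Sum>l<n. (if l = j then 0 else A $$ (i, l)) * cofactor A i l
        + (if l = j then t * cofactor A i l else 0))"
      by (intro sum.cong) auto
    finally show ?thesis by (simp add: sum.distrib)
  qed
  then show ?thesis unfolding A'_def by blast
qed

definition first_slice :: "nat \<Rightarrow> (nat \<times> nat \<times> nat \<Rightarrow> real) \<Rightarrow> real mat" where
  "first_slice n T = mat n n (\<lambda>(j, k). T (0, j, k))"

lemma multiaffine_det_first_slice: "multiaffine (\<lambda>T. det (first_slice n T))"
  unfolding multiaffine_def
proof (intro allI)
  fix T :: "nat \<times> nat \<times> nat \<Rightarrow> real" and c :: "nat \<times> nat \<times> nat"
  obtain c1 c2 c3 where c: "c = (c1, c2, c3)" by (cases c)
  show "\<exists>a b. \<forall>t. det (first_slice n (T(c := t))) = a + t * b"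
  proof (cases "c1 = 0 \<and> c2 < n")
    case True
    have "first_slice n (T(c := t)) =
        mat n n (\<lambda>(k, l). if (k, l) = (c2, c3) then t else first_slice n T $$ (k, l))" for t
      using True by (intro eq_matI) (auto simp: first_slice_def c)
    then show ?thesis
      using det_affine_in_entry[of "first_slice n T" n c2 c3] True by (simp add: first_slice_def)
  next
    case False
    then have "first_slice n (T(c := t)) = first_slice n T" for t
      by (intro eq_matI) (auto simp: first_slice_def c)
    then show ?thesis by (intro exI[of _ "det (first_slice n T)"] exI[of _ 0]) simp
  qed
qed

lemma det_first_slice_zero_null:
  assumes "n \<le> d" "n \<le> m"
  shows "{T \<in> space (tensor_lebesgue n d m). det (first_slice n T) = 0} \<in> null_sets (tensor_lebesgue n d m)"
  unfolding tensor_lebesgue_def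
proof (rule multiaffine_zero_set_null[OF _ multiaffine_det_first_slice])
  define T0 where "T0 = restrict (\<lambda>(i, j, k). if j = k then 1 else 0 :: real) (tensor_box n d m)"
  show "T0 \<in> space (Pi\<^sub>M (tensor_box n d m) (\<lambda>_. lborel))"
    by (simp add: T0_def space_PiM)
  have "first_slice n T0 = 1\<^sub>m n"
    using assms by (intro eq_matI) (auto simp: first_slice_def T0_def tensor_box_def)
  then show "det (first_slice n T0) \<noteq> 0" by simp
qed (simp add: tensor_box_def)

section \<open>CP decompositions\<close>

definition has_cp_decomp :: "nat \<Rightarrow> nat \<Rightarrow> nat \<Rightarrow> nat \<Rightarrow> (nat \<times> nat \<times> nat \<Rightarrow> real) \<Rightarrow> bool" where
  "has_cp_decomp n d m R T \<longleftrightarrow> (\<exists>a b c :: nat \<Rightarrow> nat \<Rightarrow> real.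
      \<forall>i<n. \<forall>j<d. \<forall>k<m. T (i, j, k) = (\<Sum>s<R. a s i * b s j * c s k))"

definition cp_sum :: "nat set \<Rightarrow> (nat \<Rightarrow> nat \<Rightarrow> real) \<Rightarrow> (nat \<Rightarrow> nat \<Rightarrow> real) \<Rightarrow> (nat \<Rightarrow> nat \<Rightarrow> real)
    \<Rightarrow> nat \<times> nat \<times> nat \<Rightarrow> real" where
  "cp_sum S a b c = (\<lambda>(i, j, k). \<Sum>s\<in>S. a s i * b s j * c s k)"

lemma has_cp_decomp_mono:
  assumes "has_cp_decomp n d m R T" "R \<le> R'"
  shows "has_cp_decomp n d m R' T"
proof -
  obtain a b c where abc: "\<forall>i<n. \<forall>j<d. \<forall>k<m. T (i, j, k) = (\<Sum>s<R. a s i * b s j * c s k)"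
    using assms(1) unfolding has_cp_decomp_def by blast
  define a' where "a' s i = (if s < R then a s i else 0)" for s i
  have "(\<Sum>s<R'. a' s i * b s j * c s k) = (\<Sum>s<R. a s i * b s j * c s k)" for i j k
    using assms(2) by (subst sum.mono_neutral_right[of "{..<R'}" "{..<R}"]) (auto simp: a'_def)
  then show ?thesis using abc unfolding has_cp_decomp_def by metis
qed

text \<open>Each fibre T(i, j, -) is the rank-one term e_i \<otimes> e_j \<otimes> T(i, j, -).\<close>
lemma has_cp_decomp_trivial: "has_cp_decomp n d m (n * d) T"
proof -
  define a where "a s i = (if i = s div d then 1 else 0 :: real)" for s i :: nat
  define b where "b s j = (if j = s mod d then 1 else 0 :: real)" for s j :: nat
  define c where "c s k = T (s div d, s mod d, k)" for s k :: nat
  have "T (i, j, k) = (\<Sum>s<n * d. a s i * b s j * c s k)" if "i < n" "j < d" for i j k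
  proof -
    have "i * d + j < (i + 1) * d" using that by simp
    also have "\<dots> \<le> n * d" using that by (intro mult_right_mono) auto
    finally have "i * d + j < n * d" .
    have "i = s div d \<and> j = s mod d \<longleftrightarrow> s = i * d + j" for s
    proof
      show "i = s div d \<and> j = s mod d \<Longrightarrow> s = i * d + j" by (metis div_mult_mod_eq)
      show "s = i * d + j \<Longrightarrow> i = s div d \<and> j = s mod d" using that(2) by simp
    qed
    then have "a s i * b s j * c s k = (if s = i * d + j then T (i, j, k) else 0)" for s
      by (auto simp: a_def b_def c_def)
    then show ?thesis using \<open>i * d + j < n * d\<close> by simp
  qed
  then show ?thesis unfolding has_cp_decomp_def by blast
qed

lemma cp_rank_le_iff: "cp_rank n d m T \<le> R \<longleftrightarrow> has_cp_decomp n d m R T"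
proof
  have "has_cp_decomp n d m (cp_rank n d m T) T"
    unfolding cp_rank_def has_cp_decomp_def[symmetric]
    by (rule LeastI[of "\<lambda>R. has_cp_decomp n d m R T", OF has_cp_decomp_trivial])
  then show "cp_rank n d m T \<le> R \<Longrightarrow> has_cp_decomp n d m R T"
    using has_cp_decomp_mono by blast
qed (simp add: cp_rank_def has_cp_decomp_def[symmetric] Least_le)

lemma has_cp_decomp_cp_rank: "has_cp_decomp n d m (cp_rank n d m T) T"
  using cp_rank_le_iff by blast

lemma cp_rank_le: "cp_rank n d m T \<le> n * d"
  using cp_rank_le_iff has_cp_decomp_trivial by blast

lemma cp_rank_cong:
  assumes "\<And>i j k. i < n \<Longrightarrow> j < d \<Longrightarrow> k < m \<Longrightarrow> T (i, j, k) = U (i, j, k)"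
  shows "cp_rank n d m T = cp_rank n d m U"
  unfolding cp_rank_def using assms by simp

lemma has_cp_decomp_add:
  assumes "has_cp_decomp n d m R T" "has_cp_decomp n d m R' U"
  shows "has_cp_decomp n d m (R + R') (\<lambda>x. T x + U x)"
proof -
  obtain a b c where abc: "\<forall>i<n. \<forall>j<d. \<forall>k<m. T (i, j, k) = (\<Sum>s<R. a s i * b s j * c s k)"
    using assms(1) unfolding has_cp_decomp_def by blast
  obtain a' b' c' where abc': "\<forall>i<n. \<forall>j<d. \<forall>k<m. U (i, j, k) = (\<Sum>s<R'. a' s i * b' s j * c' s k)"
    using assms(2) unfolding has_cp_decomp_def by blast
  define join where "join f g s = (if s < R then f s else g (s - R))" for f g :: "nat \<Rightarrow> nat \<Rightarrow> real" and s
  have "(\<Sum>s<R + R'. join a a' s i * join b b' s j * join c c' s k)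
      = (\<Sum>s<R. a s i * b s j * c s k) + (\<Sum>s<R'. a' s i * b' s j * c' s k)" for i j k
  proof -
    have "(\<Sum>s<R + R'. join a a' s i * join b b' s j * join c c' s k)
        = (\<Sum>s<R. join a a' s i * join b b' s j * join c c' s k)
          + (\<Sum>s<R'. join a a' (R + s) i * join b b' (R + s) j * join c c' (R + s) k)"
      by (induction R') simp_all
    then show ?thesis by (simp add: join_def)
  qed
  then show ?thesis
    unfolding has_cp_decomp_def using abc abc' by (intro exI[of _ "join a a'"] exI[of _ "join b b'"] exI[of _ "join c c'"]) auto
qed

lemma cp_rank_add_le: "cp_rank n d m (\<lambda>x. T x + U x) \<le> cp_rank n d m T + cp_rank n d m U"
  using has_cp_decomp_add[OF has_cp_decomp_cp_rank has_cp_decomp_cp_rank] cp_rank_le_iff by blast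

lemma cp_rank_cp_sum_le:
  assumes "finite S"
  shows "cp_rank n d m (cp_sum S a b c) \<le> card S"
proof -
  obtain f where f: "bij_betw f {..<card S} S"
    using ex_bij_betw_nat_finite[OF assms] by (auto simp: atLeast0LessThan)
  have "cp_sum S a b c (i, j, k) = (\<Sum>s<card S. a (f s) i * b (f s) j * c (f s) k)" for i j k
    using sum.reindex_bij_betw[OF f, of "\<lambda>s. a s i * b s j * c s k"] by (simp add: cp_sum_def)
  then have "has_cp_decomp n d m (card S) (cp_sum S a b c)"
    unfolding has_cp_decomp_def by (intro exI[of _ "a \<circ> f"] exI[of _ "b \<circ> f"] exI[of _ "c \<circ> f"]) simp
  then show ?thesis using cp_rank_le_iff by blast
qed

lemma cp_rank_cp_sum_subset:
  assumes "finite S" "cp_rank n d m (cp_sum S a b c) = card S" "J \<subseteq> S"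
  shows "cp_rank n d m (cp_sum J a b c) = card J"
proof (rule antisym)
  have finite_J: "finite J" using assms(1,3) by (rule finite_subset[rotated])
  then show "cp_rank n d m (cp_sum J a b c) \<le> card J" by (rule cp_rank_cp_sum_le)
  have "cp_sum S a b c = (\<lambda>x. cp_sum J a b c x + cp_sum (S - J) a b c x)"
    using assms(1,3) by (auto simp: cp_sum_def fun_eq_iff sum.subset_diff[of J S])
  then have "card S = cp_rank n d m (\<lambda>x. cp_sum J a b c x + cp_sum (S - J) a b c x)"
    using assms(2) by simp
  also have "\<dots> \<le> cp_rank n d m (cp_sum J a b c) + cp_rank n d m (cp_sum (S - J) a b c)"
    by (rule cp_rank_add_le)
  also have "\<dots> \<le> cp_rank n d m (cp_sum J a b c) + card (S - J)"
    using assms(1) cp_rank_cp_sum_le[of "S - J"] by simp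
  finally have "card S \<le> cp_rank n d m (cp_sum J a b c) + card (S - J)" .
  moreover have "card (S - J) = card S - card J" "card J \<le> card S"
    using assms(1,3) finite_J by (simp_all add: card_Diff_subset card_mono)
  ultimately show "card J \<le> cp_rank n d m (cp_sum J a b c)" by linarith
qed

lemma first_slice_cp_sum:
  "first_slice n (cp_sum S a b c) = mat n n (\<lambda>(j, l). \<Sum>s\<in>S. (a s 0 * b s j) * c s l)"
  by (simp add: first_slice_def cp_sum_def)

lemma nonsingular_mat_inverse:
  fixes N :: "'a :: field mat"
  assumes "N \<in> carrier_mat n n" "det N \<noteq> 0"
  obtains G where "G \<in> carrier_mat n n" "N * G = 1\<^sub>m n" "G * N = 1\<^sub>m n"
proof -
  have "N \<in> Units (ring_mat TYPE('a) n ())"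
    using assms by (rule det_non_zero_imp_unit)
  then show thesis using that by (auto simp: Units_def ring_mat_simps)
qed

definition mode3_mult :: "(nat \<times> nat \<times> nat \<Rightarrow> real) \<Rightarrow> real mat \<Rightarrow> nat \<times> nat \<times> nat \<Rightarrow> real" where
  "mode3_mult T G = (\<lambda>(i, j, l). \<Sum>k<dim_row G. T (i, j, k) * G $$ (k, l))"

lemma mode3_mult_cp_sum:
  "mode3_mult (cp_sum S a b c) G = cp_sum S a b (\<lambda>s l. \<Sum>k<dim_row G. c s k * G $$ (k, l))"
  unfolding mode3_mult_def cp_sum_def
  by (auto simp: fun_eq_iff sum_distrib_left sum_distrib_right mult.assoc intro: sum.swap)

lemma cp_rank_mode3_mult_le:
  assumes "G \<in> carrier_mat m m"
  shows "cp_rank n d m (mode3_mult T G) \<le> cp_rank n d m T"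
proof -
  obtain a b c where T: "\<And>i j k. i < n \<Longrightarrow> j < d \<Longrightarrow> k < m \<Longrightarrow> T (i, j, k) = cp_sum {..<cp_rank n d m T} a b c (i, j, k)"
    using has_cp_decomp_cp_rank[of n d m T] unfolding has_cp_decomp_def cp_sum_def by auto
  have "cp_rank n d m (mode3_mult T G) = cp_rank n d m (mode3_mult (cp_sum {..<cp_rank n d m T} a b c) G)"
    using assms T by (intro cp_rank_cong) (simp add: mode3_mult_def)
  also have "\<dots> \<le> cp_rank n d m T"
    unfolding mode3_mult_cp_sum by (rule order_trans[OF cp_rank_cp_sum_le]) simp_all
  finally show ?thesis .
qed

lemma mode3_mult_mult:
  assumes "G \<in> carrier_mat m m" "H \<in> carrier_mat m m" "l < m"
  shows "mode3_mult (mode3_mult T G) H (i, j, l) = mode3_mult T (G * H) (i, j, l)"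
  using assms
  by (auto simp: mode3_mult_def scalar_prod_def atLeast0LessThan sum_distrib_left sum_distrib_right
      mult.assoc intro: sum.swap)

lemma cp_rank_mode3_mult_invertible:
  assumes "G \<in> carrier_mat m m" "H \<in> carrier_mat m m" "G * H = 1\<^sub>m m"
  shows "cp_rank n d m (mode3_mult T G) = cp_rank n d m T"
proof (rule antisym)
  show "cp_rank n d m (mode3_mult T G) \<le> cp_rank n d m T"
    using assms(1) by (rule cp_rank_mode3_mult_le)
  have "mode3_mult (mode3_mult T G) H (i, j, l) = T (i, j, l)" if "l < m" for i j l
    using assms that by (simp add: mode3_mult_mult) (simp add: mode3_mult_def if_distrib cong: if_cong)
  then have "cp_rank n d m T = cp_rank n d m (mode3_mult (mode3_mult T G) H)"
    by (intro cp_rank_cong) simp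
  also have "\<dots> \<le> cp_rank n d m (mode3_mult T G)"
    using assms(2) by (rule cp_rank_mode3_mult_le)
  finally show "cp_rank n d m T \<le> cp_rank n d m (mode3_mult T G)" .
qed

lemma first_slice_mode3_mult:
  assumes "G \<in> carrier_mat n n"
  shows "first_slice n (mode3_mult T G) = first_slice n T * G"
  using assms by (intro eq_matI) (auto simp: first_slice_def mode3_mult_def scalar_prod_def atLeast0LessThan)

text \<open>Multiply the third mode by the inverse of the first slice.\<close>
lemma exists_cp_sum_first_slice_one:
  assumes "det (first_slice n (cp_sum S a b c)) \<noteq> 0"
  obtains c' where "cp_rank n d n (cp_sum S a b c') = cp_rank n d n (cp_sum S a b c)"
    and "first_slice n (cp_sum S a b c') = 1\<^sub>m n"
proof -
  let ?N = "first_slice n (cp_sum S a b c)"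
  have N: "?N \<in> carrier_mat n n" by (simp add: first_slice_def)
  then obtain G where G: "G \<in> carrier_mat n n" "?N * G = 1\<^sub>m n" "G * ?N = 1\<^sub>m n"
    using assms by (rule nonsingular_mat_inverse)
  define c' where "c' = (\<lambda>s l. \<Sum>k<n. c s k * G $$ (k, l))"
  have c': "cp_sum S a b c' = mode3_mult (cp_sum S a b c) G"
    using G(1) by (simp add: mode3_mult_cp_sum c'_def)
  show thesis
  proof
    show "cp_rank n d n (cp_sum S a b c') = cp_rank n d n (cp_sum S a b c)"
      unfolding c' using G(1) N G(3) by (rule cp_rank_mode3_mult_invertible)
    show "first_slice n (cp_sum S a b c') = 1\<^sub>m n"
      unfolding c' using G(1,2) by (simp add: first_slice_mode3_mult)
  qed
qed

section \<open>Removing rank-one terms from a nonsingular sum\<close>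

lemma singular_rank_one_downdate:
  fixes F :: "real mat" and u v :: "nat \<Rightarrow> real"
  assumes F: "F \<in> carrier_mat n n" "det F \<noteq> 0"
    and singular: "det (F - mat n n (\<lambda>(j, l). u j * v l)) = 0"
  obtains y where "y \<in> carrier_vec n" "F *\<^sub>v y = vec n u" "vec n v \<bullet> y = 1"
proof -
  let ?P = "mat n n (\<lambda>(j, l). u j * v l)"
  have "F - ?P \<in> carrier_mat n n" using F(1) by (simp add: minus_carrier_mat)
  then obtain w where w: "w \<in> carrier_vec n" "w \<noteq> 0\<^sub>v n" "(F - ?P) *\<^sub>v w = 0\<^sub>v n"
    using singular det_0_iff_vec_prod_zero_field by blast
  have "F *\<^sub>v w = ?P *\<^sub>v w"
  proof (rule eq_vecI)
    fix j assume j: "j < dim_vec (?P *\<^sub>v w)"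
    have "((F - ?P) *\<^sub>v w) $ j = 0" using w(3) j by simp
    then show "(F *\<^sub>v w) $ j = (?P *\<^sub>v w) $ j"
      using F(1) w(1) j by (simp add: minus_mult_distrib_mat_vec[of F n n ?P w])
  qed (use F(1) in simp)
  also have "?P *\<^sub>v w = vec n v \<bullet> w \<cdot>\<^sub>v vec n u"
    using w(1) by (intro eq_vecI) (auto simp: scalar_prod_def sum_distrib_left ac_simps)
  finally have Fw: "F *\<^sub>v w = vec n v \<bullet> w \<cdot>\<^sub>v vec n u" .
  have "vec n v \<bullet> w \<noteq> 0"
  proof
    assume "vec n v \<bullet> w = 0"
    then have "F *\<^sub>v w = 0\<^sub>v n" using Fw by auto
    then show False using F w(1,2) det_0_iff_vec_prod_zero_field[of F n] by auto
  qed
  show thesis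
  proof
    show "inverse (vec n v \<bullet> w) \<cdot>\<^sub>v w \<in> carrier_vec n" using w(1) by simp
    show "F *\<^sub>v (inverse (vec n v \<bullet> w) \<cdot>\<^sub>v w) = vec n u"
      using F(1) w(1) Fw \<open>vec n v \<bullet> w \<noteq> 0\<close> by (simp add: mult_mat_vec smult_smult_assoc)
    show "vec n v \<bullet> (inverse (vec n v \<bullet> w) \<cdot>\<^sub>v w) = 1"
      using w(1) \<open>vec n v \<bullet> w \<noteq> 0\<close> by simp
  qed
qed

lemma sum_scalar_prod_eq_trace_mult:
  fixes G :: "real mat" and u v :: "nat \<Rightarrow> nat \<Rightarrow> real"
  assumes "G \<in> carrier_mat n n"
  shows "(\<Sum>s\<in>I. vec n (v s) \<bullet> (G *\<^sub>v vec n (u s)))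
    = (\<Sum>l<n. (G * mat n n (\<lambda>(j, l). \<Sum>s\<in>I. u s j * v s l)) $$ (l, l))"
  using assms
  by (simp add: scalar_prod_def atLeast0LessThan sum_distrib_left sum_distrib_right ac_simps sum.swap[of _ I])

text \<open>If removing any term s made the sum F singular, then v_s G u_s = 1 for every s, with G the
  inverse of F; summing over s computes the trace of G F = 1 both as card I and as n.\<close>
lemma exists_remove_det_rank_one_sum_nonzero:
  fixes u v :: "nat \<Rightarrow> nat \<Rightarrow> real"
  assumes I: "finite I" "n < card I"
    and nonsingular: "det (mat n n (\<lambda>(j, l). \<Sum>s\<in>I. u s j * v s l)) \<noteq> 0"
  shows "\<exists>s0\<in>I. det (mat n n (\<lambda>(j, l). \<Sum>s\<in>I - {s0}. u s j * v s l)) \<noteq> 0"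
proof (rule ccontr)
  assume "\<not> ?thesis"
  then have singular: "det (mat n n (\<lambda>(j, l). \<Sum>s\<in>I - {s0}. u s j * v s l)) = 0" if "s0 \<in> I" for s0
    using that by blast
  define F where "F = mat n n (\<lambda>(j, l). \<Sum>s\<in>I. u s j * v s l)"
  have F: "F \<in> carrier_mat n n" by (simp add: F_def)
  then obtain G where G: "G \<in> carrier_mat n n" "G * F = 1\<^sub>m n"
    using nonsingular unfolding F_def by (rule nonsingular_mat_inverse)
  have one: "vec n (v s) \<bullet> (G *\<^sub>v vec n (u s)) = 1" if "s \<in> I" for s
  proof -
    have "F - mat n n (\<lambda>(j, l). u s j * v s l) = mat n n (\<lambda>(j, l). \<Sum>s\<in>I - {s}. u s j * v s l)"
      using I(1) that by (intro eq_matI) (auto simp: F_def sum.remove)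
    then have "det (F - mat n n (\<lambda>(j, l). u s j * v s l)) = 0"
      using singular[OF that] by simp
    then obtain y where y: "y \<in> carrier_vec n" "F *\<^sub>v y = vec n (u s)" "vec n (v s) \<bullet> y = 1"
      using singular_rank_one_downdate[OF F] nonsingular unfolding F_def by blast
    have "y = (G * F) *\<^sub>v y" using G(2) y(1) by simp
    also have "\<dots> = G *\<^sub>v vec n (u s)" using G(1) F y(1,2) by simp
    finally show ?thesis using y(3) by simp
  qed
  have "real (card I) = (\<Sum>s\<in>I. vec n (v s) \<bullet> (G *\<^sub>v vec n (u s)))"
    using one by simp
  also have "\<dots> = (\<Sum>l<n. (G * F) $$ (l, l))"
    unfolding F_def using G(1) by (rule sum_scalar_prod_eq_trace_mult)
  also have "\<dots> = real n" using G(2) by simp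
  finally show False using I(2) by simp
qed

lemma exists_subset_det_rank_one_sum_nonzero:
  fixes u v :: "nat \<Rightarrow> nat \<Rightarrow> real"
  assumes "finite I" "n \<le> r" "r \<le> card I"
    and "det (mat n n (\<lambda>(j, l). \<Sum>s\<in>I. u s j * v s l)) \<noteq> 0"
  shows "\<exists>J\<subseteq>I. card J = r \<and> det (mat n n (\<lambda>(j, l). \<Sum>s\<in>J. u s j * v s l)) \<noteq> 0"
  using assms
proof (induction "card I - r" arbitrary: I)
  case 0
  then show ?case by (intro exI[of _ I]) simp
next
  case (Suc k I)
  obtain s0 where s0: "s0 \<in> I" "det (mat n n (\<lambda>(j, l). \<Sum>s\<in>I - {s0}. u s j * v s l)) \<noteq> 0"
    using exists_remove_det_rank_one_sum_nonzero[OF Suc.prems(1) _ Suc.prems(4)] Suc.hyps(2) Suc.prems(2)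
    by fastforce
  have "card (I - {s0}) = card I - 1" using s0(1) Suc.prems(1) by simp
  then have "k = card (I - {s0}) - r" "r \<le> card (I - {s0})"
    using Suc.hyps(2) by simp_all
  then obtain J where "J \<subseteq> I - {s0}" "card J = r" "det (mat n n (\<lambda>(j, l). \<Sum>s\<in>J. u s j * v s l)) \<noteq> 0"
    using Suc.hyps(1)[of "I - {s0}"] Suc.prems(1,2) s0(2) by auto
  then show ?case by blast
qed

section \<open>Typical ranks\<close>

text \<open>The three factors are packed into one parameter p (p (0, s, -), p (1, s, -), p (2, s, -)),
  so that a bounded set of parameters is a compact cube of the product topology.\<close>
definition cp_param :: "nat \<Rightarrow> nat \<Rightarrow> nat \<Rightarrow> nat \<Rightarrow> (nat \<times> nat \<times> nat \<Rightarrow> real) \<Rightarrow> nat \<times> nat \<times> nat \<Rightarrow> real" where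
  "cp_param n d m R p = restrict (\<lambda>(i, j, k). \<Sum>s<R. p (0, s, i) * p (1, s, j) * p (2, s, k)) (tensor_box n d m)"

definition param_cube :: "nat \<Rightarrow> (nat \<times> nat \<times> nat \<Rightarrow> real) set" where
  "param_cube N = Pi\<^sub>E UNIV (\<lambda>_. {- real N .. real N})"

lemma closed_cp_param_image: "closed (cp_param n d m R ` param_cube N)"
proof -
  have "compactin (product_topology (\<lambda>_. euclidean) UNIV) (param_cube N)"
    unfolding param_cube_def by (subst compactin_PiE) auto
  then have "compact (param_cube N)"
    by (simp add: euclidean_product_topology)
  moreover have "continuous_on UNIV (cp_param n d m R)"
  proof (rule continuous_on_coordinatewise_then_product)
    have coordinate: "continuous_on UNIV (\<lambda>p :: nat \<times> nat \<times> nat \<Rightarrow> real. p y)" for y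
      by (rule continuous_on_product_coordinates)
    show "continuous_on UNIV (\<lambda>p. cp_param n d m R p x)" for x
    proof (cases "x \<in> tensor_box n d m")
      case True
      obtain i j k where "x = (i, j, k)" by (cases x)
      with True show ?thesis
        by (simp add: cp_param_def continuous_on_sum continuous_on_mult coordinate)
    qed (simp add: cp_param_def)
  qed
  ultimately show ?thesis
    by (metis compact_continuous_image compact_imp_closed continuous_on_subset subset_UNIV)
qed

lemma finite_support_in_param_cube:
  assumes "finite {y. p y \<noteq> 0}"
  shows "\<exists>N. p \<in> param_cube N"
proof -
  let ?B = "\<Sum>z\<in>{y. p y \<noteq> 0}. \<bar>p z\<bar>"
  have "\<bar>p y\<bar> \<le> ?B" for y
    using assms by (cases "p y = 0") (auto intro: member_le_sum sum_nonneg)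
  then have "p y \<in> {- real (nat \<lceil>?B\<rceil>) .. real (nat \<lceil>?B\<rceil>)}" for y
    by (smt (verit) atLeastAtMost_iff of_nat_ceiling)
  then have "p \<in> param_cube (nat \<lceil>?B\<rceil>)"
    by (simp add: param_cube_def PiE_iff)
  then show ?thesis ..
qed

lemma has_cp_decomp_imp_cp_param:
  assumes T: "T \<in> space (tensor_lebesgue n d m)" and "has_cp_decomp n d m R T"
  shows "\<exists>N. T \<in> cp_param n d m R ` param_cube N"
proof -
  obtain a b c where abc: "\<forall>i<n. \<forall>j<d. \<forall>k<m. T (i, j, k) = (\<Sum>s<R. a s i * b s j * c s k)"
    using assms(2) unfolding has_cp_decomp_def by blast
  define P where "P = {..2 :: nat} \<times> {..<R} \<times> {..<n + d + m}"
  define p where "p y = (if y \<in> P then (case y of (q, s, i) \<Rightarrow>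
      if q = 0 then a s i else if q = 1 then b s i else c s i) else 0)" for y
  have "{y. p y \<noteq> 0} \<subseteq> P" by (auto simp: p_def)
  then have "finite {y. p y \<noteq> 0}" by (rule finite_subset) (simp add: P_def)
  then obtain N where "p \<in> param_cube N"
    using finite_support_in_param_cube by blast
  moreover have "cp_param n d m R p = T"
  proof
    fix x
    show "cp_param n d m R p x = T x"
    proof (cases "x \<in> tensor_box n d m")
      case True
      obtain i j k where x: "x = (i, j, k)" by (cases x)
      with True have ijk: "i < n" "j < d" "k < m" by (simp_all add: tensor_box_def)
      then have "p (0, s, i) = a s i" "p (1, s, j) = b s j" "p (2, s, k) = c s k" if "s < R" for s
        using that by (simp_all add: p_def P_def)
      then have "cp_param n d m R p x = (\<Sum>s<R. a s i * b s j * c s k)"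
        using True unfolding x by (simp add: cp_param_def)
      then show ?thesis using abc ijk by (simp add: x)
    next
      case False
      then show ?thesis
        using PiE_arb[OF T[unfolded tensor_lebesgue_def space_PiM] False] by (simp add: cp_param_def)
    qed
  qed
  ultimately show ?thesis by blast
qed

lemma has_cp_decomp_cp_param: "has_cp_decomp n d m R (cp_param n d m R p)"
  unfolding has_cp_decomp_def
  by (intro exI[of _ "\<lambda>s i. p (0, s, i)"] exI[of _ "\<lambda>s j. p (1, s, j)"] exI[of _ "\<lambda>s k. p (2, s, k)"])
     (simp add: cp_param_def tensor_box_def)

lemma cp_rank_le_iff_cp_param:
  assumes "T \<in> space (tensor_lebesgue n d m)"
  shows "cp_rank n d m T \<le> R \<longleftrightarrow> (\<exists>N. T \<in> cp_param n d m R ` param_cube N)"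
  using has_cp_decomp_imp_cp_param[OF assms] has_cp_decomp_cp_param cp_rank_le_iff by blast

lemma borel_measurable_tensor_lebesgue: "(\<lambda>T. T) \<in> borel_measurable (tensor_lebesgue n d m)"
  unfolding tensor_lebesgue_def
proof (rule measurable_coordinatewise_then_product)
  fix x :: "nat \<times> nat \<times> nat"
  let ?M = "Pi\<^sub>M (tensor_box n d m) (\<lambda>_. lborel :: real measure)"
  show "(\<lambda>T. T x) \<in> borel_measurable ?M"
  proof (cases "x \<in> tensor_box n d m")
    case True
    then have "(\<lambda>T. T x) \<in> measurable ?M lborel"
      by (rule measurable_component_singleton)
    then show ?thesis by (simp only: measurable_lborel1)
  next
    case False
    have "T x = undefined" if "T \<in> space ?M" for T
      using that False unfolding space_PiM by (rule PiE_arb)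
    then have "(\<lambda>T. T x) \<in> borel_measurable ?M \<longleftrightarrow> (\<lambda>_. undefined :: real) \<in> borel_measurable ?M"
      by (rule measurable_cong)
    then show ?thesis by simp
  qed
qed

lemma sets_cp_rank_le: "{T \<in> space (tensor_lebesgue n d m). cp_rank n d m T \<le> R} \<in> sets (tensor_lebesgue n d m)"
proof -
  let ?M = "tensor_lebesgue n d m" and ?F = "\<Union>N. cp_param n d m R ` param_cube N"
  have "?F \<in> sets borel"
    by (rule sets.countable_UN) (use closed_cp_param_image borel_closed in blast)
  then have "(\<lambda>T. T) -` ?F \<inter> space ?M \<in> sets ?M"
    by (rule measurable_sets[OF borel_measurable_tensor_lebesgue])
  moreover have "(\<lambda>T. T) -` ?F \<inter> space ?M = {T \<in> space ?M. cp_rank n d m T \<le> R}"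
  proof (rule Set.set_eqI)
    fix T
    show "T \<in> (\<lambda>T. T) -` ?F \<inter> space ?M \<longleftrightarrow> T \<in> {T \<in> space ?M. cp_rank n d m T \<le> R}"
      by (cases "T \<in> space ?M") (simp_all add: cp_rank_le_iff_cp_param)
  qed
  ultimately show ?thesis by simp
qed

lemma sets_cp_rank_eq: "{T \<in> space (tensor_lebesgue n d m). cp_rank n d m T = R} \<in> sets (tensor_lebesgue n d m)"
proof (cases R)
  case 0
  then show ?thesis using sets_cp_rank_le[of n d m 0] by simp
next
  case (Suc R')
  then have "{T \<in> space (tensor_lebesgue n d m). cp_rank n d m T = R} =
      {T \<in> space (tensor_lebesgue n d m). cp_rank n d m T \<le> R} -
      {T \<in> space (tensor_lebesgue n d m). cp_rank n d m T \<le> R'}"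
    by (auto simp: le_Suc_eq)
  then show ?thesis using sets_cp_rank_le by simp
qed

lemma typical_rank_le:
  assumes "typical_rank n d m R"
  shows "R \<le> n * d"
proof -
  have "emeasure (tensor_lebesgue n d m) {T \<in> space (tensor_lebesgue n d m). cp_rank n d m T = R} > 0"
    using assms unfolding typical_rank_def Let_def by blast
  then have "{T \<in> space (tensor_lebesgue n d m). cp_rank n d m T = R} \<noteq> {}"
    by (metis emeasure_empty less_irrefl)
  then show ?thesis using cp_rank_le by blast
qed

lemma emeasure_space_tensor_lebesgue_pos: "emeasure (tensor_lebesgue n d m) (space (tensor_lebesgue n d m)) > 0"
proof -
  let ?M = "tensor_lebesgue n d m" and ?cube = "Pi\<^sub>E (tensor_box n d m) (\<lambda>_. {0..1 :: real})"
  interpret product_sigma_finite "\<lambda>_. lborel :: real measure" by standard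
  have "emeasure ?M ?cube = (\<Prod>i\<in>tensor_box n d m. emeasure lborel {0..1 :: real})"
    unfolding tensor_lebesgue_def by (rule emeasure_PiM) (auto simp: tensor_box_def)
  then have "emeasure ?M ?cube = 1" by simp
  moreover have "?cube \<subseteq> space ?M"
    by (auto simp: tensor_lebesgue_def space_PiM)
  ultimately have "1 \<le> emeasure ?M (space ?M)"
    by (metis emeasure_mono sets.top)
  then show ?thesis using ennreal_zero_less_one by (rule order.strict_trans2[rotated])
qed

lemma typical_rank_exists: "\<exists>R. typical_rank n d m R"
proof (rule ccontr)
  assume "\<nexists>R. typical_rank n d m R"
  let ?M = "tensor_lebesgue n d m"
  define S where "S R = {T \<in> space ?M. cp_rank n d m T = R}" for R
  have S_sets: "S R \<in> sets ?M" for R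
    unfolding S_def by (rule sets_cp_rank_eq)
  with \<open>\<nexists>R. typical_rank n d m R\<close> have "emeasure ?M (S R) = 0" for R
    unfolding typical_rank_def Let_def S_def by auto
  have "space ?M = (\<Union>R\<in>{..n * d}. S R)"
    unfolding S_def using cp_rank_le by auto
  then have "emeasure ?M (space ?M) \<le> (\<Sum>R\<in>{..n * d}. emeasure ?M (S R))"
    by (simp only:) (rule emeasure_subadditive_finite, use S_sets in auto)
  also have "\<dots> = 0" using \<open>\<And>R. emeasure ?M (S R) = 0\<close> by simp
  finally show False
    using emeasure_space_tensor_lebesgue_pos[of n d m] by simp
qed

lemma typical_rank_R_typ_max: "typical_rank n d m (R_typ_max n d m)"
proof -
  have "finite {R. typical_rank n d m R}"
    by (rule finite_subset[of _ "{..n * d}"]) (auto dest: typical_rank_le)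
  then show ?thesis
    using typical_rank_exists Max_in[of "{R. typical_rank n d m R}"] by (auto simp: R_typ_max_def)
qed

lemma typical_rank_avoids_null:
  assumes "typical_rank n d m R" "N \<in> null_sets (tensor_lebesgue n d m)"
  obtains T where "T \<in> space (tensor_lebesgue n d m)" "cp_rank n d m T = R" "T \<notin> N"
proof -
  let ?M = "tensor_lebesgue n d m" and ?S = "{T \<in> space (tensor_lebesgue n d m). cp_rank n d m T = R}"
  have "?S \<in> sets ?M" "emeasure ?M ?S > 0"
    using assms(1) unfolding typical_rank_def Let_def by auto
  moreover have "emeasure ?M ?S \<le> emeasure ?M N" if "?S \<subseteq> N"
    using that assms(2) by (intro emeasure_mono) auto
  ultimately have "\<not> ?S \<subseteq> N"
    using assms(2) by fastforce
  then show thesis using that by blast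
qed

lemma typical_rank_exists_cp_sum:
  assumes "typical_rank n d m R" "n \<le> d" "n \<le> m"
  obtains a b c where "cp_rank n d m (cp_sum {..<R} a b c) = R"
    and "det (first_slice n (cp_sum {..<R} a b c)) \<noteq> 0"
proof -
  obtain T where T: "cp_rank n d m T = R" "det (first_slice n T) \<noteq> 0"
    using typical_rank_avoids_null[OF assms(1) det_first_slice_zero_null[OF assms(2,3)]] by blast
  then obtain a b c where abc: "\<And>i j k. i < n \<Longrightarrow> j < d \<Longrightarrow> k < m \<Longrightarrow> T (i, j, k) = cp_sum {..<R} a b c (i, j, k)"
    using has_cp_decomp_cp_rank[of n d m T] unfolding has_cp_decomp_def cp_sum_def by auto
  show thesis
  proof
    show "cp_rank n d m (cp_sum {..<R} a b c) = R"
      using T(1) abc cp_rank_cong[of n d m T "cp_sum {..<R} a b c"] by simp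
    have "first_slice n (cp_sum {..<R} a b c) = first_slice n T"
      using abc assms(2,3) by (intro eq_matI) (auto simp: first_slice_def)
    then show "det (first_slice n (cp_sum {..<R} a b c)) \<noteq> 0" using T(2) by simp
  qed
qed

section \<open>Realisation by matrices\<close>

lemma mat_rank_leading_block:
  fixes M :: "real mat"
  assumes M: "M \<in> carrier_mat d n" and "n \<le> d" and det: "det (mat n n (\<lambda>(j, l). M $$ (j, l))) \<noteq> 0"
  shows "mat_rank M = n"
proof -
  interpret vec_space "TYPE(real)" d .
  have pick: "pick {..<n} i = i" if "i < n" for i
  proof -
    have "{a \<in> {..<n}. a < i} = {..<i}" using that by auto
    then show ?thesis using pick_card_in_set[of i "{..<n}"] that by simp
  qed
  have "{i. i < d \<and> i \<in> {..<n}} = {..<n}" using \<open>n \<le> d\<close> by auto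
  then have "submatrix M {..<n} UNIV = mat n n (\<lambda>(j, l). M $$ (j, l))"
    using M by (intro eq_matI) (auto simp: submatrix_def pick pick_UNIV)
  then have "card {j. j < n \<and> j \<in> UNIV} \<le> rank M"
    using rank_gt_minor[OF M] det by metis
  then show ?thesis
    using rank_le_nc[OF M] M by (simp add: mat_rank_def)
qed

lemma mat_rank_leading_identity:
  fixes M :: "real mat"
  assumes M: "M \<in> carrier_mat d n" and "n \<le> d"
    and one: "\<And>j l. j < n \<Longrightarrow> l < n \<Longrightarrow> M $$ (j, l) = (if j = l then 1 else 0)"
  shows "mat_rank M = n" "mat_rank (map_mat tanh M) = n"
proof -
  have "mat n n (\<lambda>(j, l). M $$ (j, l)) = 1\<^sub>m n"
    using one by (intro eq_matI) auto
  then show "mat_rank M = n"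
    using M \<open>n \<le> d\<close> by (simp add: mat_rank_leading_block)
  have "mat n n (\<lambda>(j, l). map_mat tanh M $$ (j, l)) = tanh 1 \<cdot>\<^sub>m 1\<^sub>m n"
    using M \<open>n \<le> d\<close> one by (intro eq_matI) auto
  then show "mat_rank (map_mat tanh M) = n"
    using M \<open>n \<le> d\<close> by (simp add: mat_rank_leading_block)
qed

lemma index_mult_diag_transpose:
  fixes A B C :: "real mat"
  assumes "A \<in> carrier_mat n r" "B \<in> carrier_mat d r" "C \<in> carrier_mat m r" "h \<in> carrier_vec n"
    and "j < d" "l < m"
  shows "(B * diag_of_vec (transpose_mat A *\<^sub>v h) * transpose_mat C) $$ (j, l)
    = (\<Sum>i<n. h $ i * cp_tensor A B C (i, j, l))"
  using assms
  by (auto simp: diag_of_vec_def cp_tensor_def scalar_prod_def atLeast0LessThan sum_distrib_left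
      sum_distrib_right ac_simps if_distrib cong: if_cong intro: sum.swap)

lemma exists_matrices_of_normalized_cp_sum:
  assumes J: "finite J" "card J = r" and "n \<le> d"
    and rank: "cp_rank n d n (cp_sum J a b c) = r"
    and slice: "first_slice n (cp_sum J a b c) = 1\<^sub>m n"
  shows "\<exists>A B C :: real mat. \<exists>h0 :: real vec.
    A \<in> carrier_mat n r \<and> B \<in> carrier_mat d r \<and> C \<in> carrier_mat n r \<and> h0 \<in> carrier_vec n \<and>
    cp_rank n d n (cp_tensor A B C) = r \<and>
    mat_rank (B * diag_of_vec (transpose_mat A *\<^sub>v h0) * transpose_mat C) = n \<and>
    mat_rank (map_mat tanh (B * diag_of_vec (transpose_mat A *\<^sub>v h0) * transpose_mat C)) = n"
proof -
  obtain f where f: "bij_betw f {..<r} J"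
    using ex_bij_betw_nat_finite[OF J(1)] J(2) by (auto simp: atLeast0LessThan)
  define A where "A = mat n r (\<lambda>(i, s). a (f s) i)"
  define B where "B = mat d r (\<lambda>(j, s). b (f s) j)"
  define C where "C = mat n r (\<lambda>(k, s). c (f s) k)"
  define M where "M = B * diag_of_vec (transpose_mat A *\<^sub>v unit_vec n 0) * transpose_mat C"
  have carrier: "A \<in> carrier_mat n r" "B \<in> carrier_mat d r" "C \<in> carrier_mat n r"
    by (simp_all add: A_def B_def C_def)
  have tensor: "cp_tensor A B C (i, j, k) = cp_sum J a b c (i, j, k)" if "i < n" "j < d" "k < n" for i j k
    using that sum.reindex_bij_betw[OF f, of "\<lambda>s. a s i * b s j * c s k"]
    by (simp add: cp_tensor_def cp_sum_def A_def B_def C_def)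
  have M: "M \<in> carrier_mat d n"
    unfolding M_def using carrier by (auto simp: diag_of_vec_def intro!: mult_carrier_mat)
  have M_one: "M $$ (j, l) = (if j = l then 1 else 0)" if "j < n" "l < n" for j l
  proof -
    have "M $$ (j, l) = (\<Sum>i<n. unit_vec n 0 $ i * cp_tensor A B C (i, j, l))"
      unfolding M_def using that \<open>n \<le> d\<close> by (intro index_mult_diag_transpose[OF carrier]) auto
    also have "\<dots> = cp_tensor A B C (0, j, l)"
      using that by (simp add: unit_vec_def if_distrib[of "\<lambda>x. x * _"] cong: if_cong)
    also have "\<dots> = first_slice n (cp_sum J a b c) $$ (j, l)"
      using that \<open>n \<le> d\<close> by (simp add: tensor first_slice_def)
    finally show ?thesis using slice that by simp
  qed
  have "mat_rank M = n" "mat_rank (map_mat tanh M) = n"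
    using mat_rank_leading_identity[OF M \<open>n \<le> d\<close> M_one] by simp_all
  moreover have "cp_rank n d n (cp_tensor A B C) = r"
    using rank cp_rank_cong[of n d n "cp_tensor A B C" "cp_sum J a b c"] tensor by simp
  ultimately show ?thesis
    using carrier unfolding M_def by (intro exI[of _ A] exI[of _ B] exI[of _ C] exI[of _ "unit_vec n 0"]) simp
qed

theorem lemma2:
  fixes n d r :: nat
  assumes "n \<le> d" and "d \<le> r" and "r \<le> R_typ_max n d n"
  shows "\<exists>A B C :: real mat. \<exists>h0 :: real vec.
    A \<in> carrier_mat n r \<and> B \<in> carrier_mat d r \<and> C \<in> carrier_mat n r \<and> h0 \<in> carrier_vec n \<and>
    cp_rank n d n (cp_tensor A B C) = r \<and>
    mat_rank (B * diag_of_vec (transpose_mat A *\<^sub>v h0) * transpose_mat C) = n \<and>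
    mat_rank (map_mat tanh (B * diag_of_vec (transpose_mat A *\<^sub>v h0) * transpose_mat C)) = n"
proof -
  let ?R = "R_typ_max n d n"
  obtain a b c where rank: "cp_rank n d n (cp_sum {..<?R} a b c) = ?R"
    and nonsingular: "det (first_slice n (cp_sum {..<?R} a b c)) \<noteq> 0"
    using typical_rank_exists_cp_sum[OF typical_rank_R_typ_max assms(1) order_refl] by blast
  obtain J where J: "J \<subseteq> {..<?R}" "card J = r" and slice_J: "det (first_slice n (cp_sum J a b c)) \<noteq> 0"
    using exists_subset_det_rank_one_sum_nonzero[of "{..<?R}" n r "\<lambda>s j. a s 0 * b s j" c] nonsingular assms
    unfolding first_slice_cp_sum by auto
  obtain c' where "cp_rank n d n (cp_sum J a b c') = cp_rank n d n (cp_sum J a b c)"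
    and "first_slice n (cp_sum J a b c') = 1\<^sub>m n"
    using exists_cp_sum_first_slice_one[OF slice_J] by blast
  moreover have "cp_rank n d n (cp_sum J a b c) = r"
    using cp_rank_cp_sum_subset[of "{..<?R}" n d n a b c J] rank J by simp
  moreover have "finite J" using J(1) finite_subset by blast
  ultimately show ?thesis
    using exists_matrices_of_normalized_cp_sum[OF _ J(2) assms(1)] by simp
qed

end
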